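(* Let $(b,c)$ be a connected weighted graph over $X$ and consider: (A) $X$ is totally bounded with respect to $d$; (B) $X$ is totally bounded with respect to $\varrho$; (C) $X$ is totally bounded with respect to every metric $\sigma$ on $X$ which is intrinsic with respect to some measure $m$ with $m(X)<\infty$; (D) $\widetilde D\subseteq\ell^\infty(X)$. Then (A) $\Rightarrow$ (B) $\Rightarrow$ (D). If $c\equiv0$, then furthermore (B) $\Rightarrow$ (C) $\Rightarrow$ (D).
   Context: Let $X$ be a countably infinite set. A weighted graph $(b,c)$ over $X$ consists of a symmetric $b:X\times X\to[0,\infty)$ with $b(x,x)=0$ and $\sum_{y}b(x,y)<\infty$ for all $x$, and $c:X\to[0,\infty)$. A path is a finite sequence $(x_0,\dots,x_n)$ of pairwise distinct vertices with $b(x_{i-1},x_i)>0$; connected means any two distinct vertices are joined by a path. For $f:X\to\mathbb C$ let $\widetilde Q(f)=\frac12\sum_{x,y}b(x,y)|f(x)-f(y)|^2+\sum_x c(x)|f(x)|^2$ and $\widetilde D=\{f:\widetilde Q(f)<\infty\}$. Define $d(x,y)=\inf\{\sum_{i=1}^n1/b(x_{i-1},x_i):(x_0,\dots,x_n)\text{ a path from }x\text{ to }y\}$ ($d(x,x)=0$) and $\varrho(x,y)=\sup\{|f(x)-f(y)|:f\in\widetilde D,\widetilde Q(f)\le1\}$. A measure on $X$ is $m:X\to[0,\infty)$ with $m(A)=\sum_{x\in A}m(x)$; a metric $\sigma$ is intrinsic with respect to $m$ if $\frac12\sum_y b(x,y)\sigma(x,y)^2\le m(x)$ for all $x$. *)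

theory Defs
  imports "HOL-Analysis.Analysis"
begin

definition weighted_graph :: "('x \<Rightarrow> 'x \<Rightarrow> real) \<Rightarrow> ('x \<Rightarrow> real) \<Rightarrow> bool" where
  "weighted_graph b c \<longleftrightarrow>
     (\<forall>x y. b x y \<ge> 0) \<and> (\<forall>x y. b x y = b y x) \<and> (\<forall>x. b x x = 0) \<and>
     (\<forall>x. (\<lambda>y. b x y) summable_on UNIV) \<and> (\<forall>x. c x \<ge> 0)"

definition is_path :: "('x \<Rightarrow> 'x \<Rightarrow> real) \<Rightarrow> 'x list \<Rightarrow> bool" where
  "is_path b xs \<longleftrightarrow> xs \<noteq> [] \<and> distinct xs \<and>
     (\<forall>i. Suc i < length xs \<longrightarrow> b (xs ! i) (xs ! Suc i) > 0)"

definition path_from_to :: "('x \<Rightarrow> 'x \<Rightarrow> real) \<Rightarrow> 'x list \<Rightarrow> 'x \<Rightarrow> 'x \<Rightarrow> bool" where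
  "path_from_to b xs x y \<longleftrightarrow> is_path b xs \<and> hd xs = x \<and> last xs = y"

definition graph_connected :: "('x \<Rightarrow> 'x \<Rightarrow> real) \<Rightarrow> bool" where
  "graph_connected b \<longleftrightarrow> (\<forall>x y. x \<noteq> y \<longrightarrow> (\<exists>xs. path_from_to b xs x y))"

definition Qt :: "('x \<Rightarrow> 'x \<Rightarrow> real) \<Rightarrow> ('x \<Rightarrow> real) \<Rightarrow> ('x \<Rightarrow> complex) \<Rightarrow> ennreal" where
  "Qt b c f = ennreal (1/2) * (\<Sum>\<^sub>\<infinity>(x,y)\<in>UNIV. ennreal (b x y * (cmod (f x - f y))\<^sup>2))
             + (\<Sum>\<^sub>\<infinity>x\<in>UNIV. ennreal (c x * (cmod (f x))\<^sup>2))"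

definition Dt :: "('x \<Rightarrow> 'x \<Rightarrow> real) \<Rightarrow> ('x \<Rightarrow> real) \<Rightarrow> ('x \<Rightarrow> complex) set" where
  "Dt b c = {f. Qt b c f < \<infinity>}"

definition path_length :: "('x \<Rightarrow> 'x \<Rightarrow> real) \<Rightarrow> 'x list \<Rightarrow> real" where
  "path_length b xs = (\<Sum>i<length xs - 1. 1 / b (xs ! i) (xs ! Suc i))"

definition path_metric :: "('x \<Rightarrow> 'x \<Rightarrow> real) \<Rightarrow> 'x \<Rightarrow> 'x \<Rightarrow> real" where
  "path_metric b x y = (if x = y then 0 else Inf {path_length b xs | xs. path_from_to b xs x y})"

definition resistance_metric :: "('x \<Rightarrow> 'x \<Rightarrow> real) \<Rightarrow> ('x \<Rightarrow> real) \<Rightarrow> 'x \<Rightarrow> 'x \<Rightarrow> real" where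
  "resistance_metric b c x y = Sup {cmod (f x - f y) | f. f \<in> Dt b c \<and> Qt b c f \<le> 1}"

definition is_metric_on :: "('x \<Rightarrow> 'x \<Rightarrow> real) \<Rightarrow> bool" where
  "is_metric_on \<sigma> \<longleftrightarrow> (\<forall>x y. \<sigma> x y \<ge> 0) \<and> (\<forall>x y. \<sigma> x y = 0 \<longleftrightarrow> x = y) \<and>
     (\<forall>x y. \<sigma> x y = \<sigma> y x) \<and> (\<forall>x y z. \<sigma> x z \<le> \<sigma> x y + \<sigma> y z)"

definition totally_bounded_wrt :: "('x \<Rightarrow> 'x \<Rightarrow> real) \<Rightarrow> bool" where
  "totally_bounded_wrt \<sigma> \<longleftrightarrow> (\<forall>\<epsilon>>0. \<exists>F. finite F \<and> (\<forall>x. \<exists>y\<in>F. \<sigma> x y < \<epsilon>))"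

definition is_measure :: "('x \<Rightarrow> real) \<Rightarrow> bool" where
  "is_measure m \<longleftrightarrow> (\<forall>x. m x \<ge> 0)"

definition total_mass :: "('x \<Rightarrow> real) \<Rightarrow> ennreal" where
  "total_mass m = (\<Sum>\<^sub>\<infinity>x\<in>UNIV. ennreal (m x))"

definition intrinsic :: "('x \<Rightarrow> 'x \<Rightarrow> real) \<Rightarrow> ('x \<Rightarrow> real) \<Rightarrow> ('x \<Rightarrow> 'x \<Rightarrow> real) \<Rightarrow> bool" where
  "intrinsic b m \<sigma> \<longleftrightarrow>
     (\<forall>x. ennreal (1/2) * (\<Sum>\<^sub>\<infinity>y\<in>UNIV. ennreal (b x y * (\<sigma> x y)\<^sup>2)) \<le> ennreal (m x))"

definition bounded_fun :: "('x \<Rightarrow> complex) \<Rightarrow> bool" where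
  "bounded_fun f \<longleftrightarrow> (\<exists>C. \<forall>x. cmod (f x) \<le> C)"

end

theory Submission
  imports Defs
begin

(* For f with Q(f) <= 1, Cauchy-Schwarz along a path gives |f x - f y|^2 <= 2 \<Sum> 1/b, so
   rho <= sqrt (2 d) and (A) implies (B). Scaling gives |f x - f y| <= sqrt (Q f) * rho x y, so a
   finite rho-net bounds every f of finite energy: (B) implies (D). If c = 0 and sigma is intrinsic
   for m, the function sigma(., y) has energy at most m(X), hence sigma <= sqrt (m X) * rho and (B)
   implies (C). For (C) implies (D), a function f of finite energy yields the metric
   sigma x y = |f x - f y| + w x + w y (x \<noteq> y) with weights w > 0 so small that
   \<Sum> b sigma^2 < \<infinity>; sigma is intrinsic for the finite measure m x = 1/2 \<Sum>_y b x y sigma(x, y)^2,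
   and a finite sigma-net bounds f. *)

section \<open>Nonnegative infinite sums\<close>

(* The library's summable_on_ennreal is, through a coercion, a statement about enat-valued sums. *)
lemma ennreal_summable_on [simp]: "(f :: 'a \<Rightarrow> ennreal) summable_on A"
  by (rule nonneg_summable_on_complete) simp

lemma sum_le_infsum_ennreal:
  "finite F \<Longrightarrow> F \<subseteq> A \<Longrightarrow> sum (f :: 'a \<Rightarrow> ennreal) F \<le> infsum f A"
  by (subst nonneg_infsum_complete) (auto intro!: SUP_upper)

lemma infsum_mono_ennreal:
  "(\<And>x. (f :: 'a \<Rightarrow> ennreal) x \<le> g x) \<Longrightarrow> infsum f A \<le> infsum g A"
  by (rule infsum_mono) auto

lemma infsum_mono_set_ennreal:
  "A \<subseteq> B \<Longrightarrow> infsum (f :: 'a \<Rightarrow> ennreal) A \<le> infsum f B"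
  by (rule infsum_mono_neutral) auto

lemma infsum_cmult_right_ennreal:
  "(\<Sum>\<^sub>\<infinity>x\<in>A. c * f x) = (c :: ennreal) * infsum f A"
  by (simp add: nonneg_infsum_complete SUP_mult_left_ennreal sum_distrib_left)

lemma ennreal_times_less_top: "X < \<infinity> \<Longrightarrow> ennreal a * X < \<infinity>"
  by (simp add: ennreal_mult_less_top)

lemma infsum_Sigma_ennreal:
  "infsum (f :: 'a \<times> 'b \<Rightarrow> ennreal) UNIV = (\<Sum>\<^sub>\<infinity>x. \<Sum>\<^sub>\<infinity>y. f (x, y))"
proof (rule antisym)
  show "infsum f UNIV \<le> (\<Sum>\<^sub>\<infinity>x. \<Sum>\<^sub>\<infinity>y. f (x, y))"
  proof (subst nonneg_infsum_complete, simp, rule SUP_least, clarsimp)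
    fix F :: "('a \<times> 'b) set" assume F: "finite F"
    have "sum f F \<le> sum f (fst ` F \<times> snd ` F)"
      by (rule sum_mono2) (use F in force)+
    also have "\<dots> = (\<Sum>x\<in>fst ` F. \<Sum>y\<in>snd ` F. f (x, y))"
      by (simp add: sum.cartesian_product)
    also have "\<dots> \<le> (\<Sum>x\<in>fst ` F. \<Sum>\<^sub>\<infinity>y. f (x, y))"
      by (intro sum_mono sum_le_infsum_ennreal) (use F in auto)
    also have "\<dots> \<le> (\<Sum>\<^sub>\<infinity>x. \<Sum>\<^sub>\<infinity>y. f (x, y))"
      by (rule sum_le_infsum_ennreal) (use F in auto)
    finally show "sum f F \<le> (\<Sum>\<^sub>\<infinity>x. \<Sum>\<^sub>\<infinity>y. f (x, y))" .
  qed
  have rows: "(\<Sum>x\<in>G. \<Sum>\<^sub>\<infinity>y. f (x, y)) = infsum f (G \<times> UNIV)" if "finite G" for G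
    using that
  proof (induction G rule: finite_induct)
    case (insert a G)
    have split: "insert a G \<times> UNIV = range (Pair a) \<union> G \<times> UNIV" by auto
    have "infsum f (insert a G \<times> UNIV) = infsum f (range (Pair a)) + infsum f (G \<times> UNIV)"
      unfolding split by (rule infsum_Un_disjoint) (use insert in auto)
    also have "infsum f (range (Pair a)) = (\<Sum>\<^sub>\<infinity>y. f (a, y))"
      by (subst infsum_reindex) (auto simp: inj_on_def o_def)
    finally show ?case using insert by simp
  qed simp
  show "(\<Sum>\<^sub>\<infinity>x. \<Sum>\<^sub>\<infinity>y. f (x, y)) \<le> infsum f UNIV"
  proof (subst nonneg_infsum_complete, simp, rule SUP_least, clarsimp)
    fix G :: "'a set" assume "finite G"
    then show "(\<Sum>x\<in>G. \<Sum>\<^sub>\<infinity>y. f (x, y)) \<le> infsum f UNIV"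
      using rows infsum_mono_set_ennreal[of "G \<times> UNIV" UNIV f] by simp
  qed
qed

lemma infsum_swap_ennreal:
  "(\<Sum>\<^sub>\<infinity>(x, y). (g :: 'a \<Rightarrow> 'a \<Rightarrow> ennreal) x y) = (\<Sum>\<^sub>\<infinity>(x, y). g y x)"
proof -
  have "infsum (\<lambda>(x, y). g x y) (range prod.swap) = infsum ((\<lambda>(x, y). g x y) \<circ> prod.swap) UNIV"
    by (rule infsum_reindex) simp
  then show ?thesis by (simp add: o_def case_prod_unfold)
qed

lemma infsum_ennreal_of_has_sum:
  assumes "(f has_sum S) A" and "\<And>x. x \<in> A \<Longrightarrow> f x \<ge> 0"
  shows "(\<Sum>\<^sub>\<infinity>x\<in>A. ennreal (f x)) = ennreal S"
proof -
  have "f summable_on A" and S: "S = infsum f A"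
    using assms(1) by (auto simp: summable_on_def infsumI)
  then have "ennreal S = (SUP F\<in>{F. finite F \<and> F \<subseteq> A}. ennreal (sum f F))"
    using infsum_nonneg_is_SUPREMUM_ennreal assms(2) by blast
  also have "\<dots> = (SUP F\<in>{F. finite F \<and> F \<subseteq> A}. (\<Sum>x\<in>F. ennreal (f x)))"
    by (rule SUP_cong) (auto intro!: sum_ennreal[symmetric] assms(2))
  also have "\<dots> = (\<Sum>\<^sub>\<infinity>x\<in>A. ennreal (f x))"
    by (rule nonneg_infsum_complete[symmetric]) simp
  finally show ?thesis by simp
qed

lemma infsum_geometric_half_ennreal: "(\<Sum>\<^sub>\<infinity>k::nat. ennreal ((1/2) ^ k)) = 2"
proof -
  have "(\<lambda>k::nat. (1/2 :: real) ^ k) sums 2"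
    using geometric_sums[of "1/2 :: real"] by simp
  then have "((\<lambda>k::nat. (1/2 :: real) ^ k) has_sum 2) UNIV"
    by (rule sums_nonneg_imp_has_sum_strong) simp
  from infsum_ennreal_of_has_sum[OF this] show ?thesis by simp
qed

section \<open>Energy along paths\<close>

lemma weighted_graphD:
  assumes "weighted_graph b c"
  shows "b x y \<ge> 0" and "b x y = b y x" and "(\<lambda>y. b x y) summable_on UNIV" and "c x \<ge> 0"
  using assms unfolding weighted_graph_def by blast+

lemma edge_energy_le_Qt:
  "(\<Sum>\<^sub>\<infinity>(x, y). ennreal (b x y * (cmod (f x - f y))\<^sup>2)) \<le> 2 * Qt b c f"
proof -
  let ?E = "\<Sum>\<^sub>\<infinity>(x, y). ennreal (b x y * (cmod (f x - f y))\<^sup>2)"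
  have "ennreal 2 * ennreal (1/2) = 1"
    by (subst ennreal_mult[symmetric]) auto
  then have "?E = 2 * (ennreal (1/2) * ?E)"
    by (simp add: mult.assoc[symmetric])
  also have "\<dots> \<le> 2 * Qt b c f"
    unfolding Qt_def by (intro mult_left_mono) simp_all
  finally show ?thesis .
qed

lemma edge_energy_finite_if_Dt:
  assumes "f \<in> Dt b c"
  shows "(\<Sum>\<^sub>\<infinity>(x, y). ennreal (b x y * (cmod (f x - f y))\<^sup>2)) < \<infinity>"
proof -
  have "2 * Qt b c f < \<infinity>"
    using assms by (simp add: Dt_def ennreal_mult_less_top)
  with edge_energy_le_Qt show ?thesis by (rule le_less_trans)
qed

lemma Qt_zero: "Qt b c (\<lambda>_. 0) = 0"
  unfolding Qt_def by (simp add: case_prod_unfold)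

lemma Qt_scale:
  assumes "weighted_graph b c"
  shows "Qt b c (\<lambda>x. a * f x) = ennreal ((cmod a)\<^sup>2) * Qt b c f"
proof -
  have edge: "ennreal (b x y * (cmod (a * f x - a * f y))\<^sup>2)
      = ennreal ((cmod a)\<^sup>2) * ennreal (b x y * (cmod (f x - f y))\<^sup>2)" for x y
    using weighted_graphD(1)[OF assms, of x y]
    by (simp add: ennreal_mult[symmetric] norm_mult power_mult_distrib right_diff_distrib[symmetric]
        mult.left_commute)
  have vertex: "ennreal (c x * (cmod (a * f x))\<^sup>2)
      = ennreal ((cmod a)\<^sup>2) * ennreal (c x * (cmod (f x))\<^sup>2)" for x
    using weighted_graphD(4)[OF assms, of x]
    by (simp add: ennreal_mult[symmetric] norm_mult power_mult_distrib mult.left_commute)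
  show ?thesis
    unfolding Qt_def edge vertex case_prod_unfold infsum_cmult_right_ennreal
    by (simp add: distrib_left mult.left_commute)
qed

lemma Cauchy_Schwarz_weighted_sum:
  fixes w D :: "nat \<Rightarrow> real"
  assumes "\<And>i. i < n \<Longrightarrow> w i > 0"
  shows "(\<Sum>i<n. D i)\<^sup>2 \<le> (\<Sum>i<n. 1 / w i) * (\<Sum>i<n. w i * (D i)\<^sup>2)"
proof -
  have "D i = sqrt (1 / w i) * (sqrt (w i) * D i)" if "i < n" for i
    using assms[OF that] by (simp add: mult.assoc[symmetric] real_sqrt_mult[symmetric])
  then have "(\<Sum>i<n. D i) = (\<Sum>i<n. sqrt (1 / w i) * (sqrt (w i) * D i))"
    by (intro sum.cong) auto
  then have "(\<Sum>i<n. D i)\<^sup>2 \<le> (\<Sum>i<n. (sqrt (1 / w i))\<^sup>2) * (\<Sum>i<n. (sqrt (w i) * D i)\<^sup>2)"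
    by (metis Cauchy_Schwarz_ineq_sum)
  also have "\<dots> = (\<Sum>i<n. 1 / w i) * (\<Sum>i<n. w i * (D i)\<^sup>2)"
    using assms by (intro arg_cong2[where f = "(*)"] sum.cong) (auto simp: power_mult_distrib less_imp_le)
  finally show ?thesis .
qed

lemma norm_diff_hd_last_le_sum:
  fixes g :: "'a \<Rightarrow> 'b :: real_normed_vector"
  assumes "xs \<noteq> []"
  shows "norm (g (hd xs) - g (last xs)) \<le> (\<Sum>i<length xs - 1. norm (g (xs ! i) - g (xs ! Suc i)))"
proof -
  let ?n = "length xs - 1"
  have "g (hd xs) - g (last xs) = g (xs ! 0) - g (xs ! ?n)"
    using assms by (simp add: hd_conv_nth last_conv_nth)
  also have "\<dots> = (\<Sum>i<?n. g (xs ! i) - g (xs ! Suc i))"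
    using sum_lessThan_telescope'[of "\<lambda>i. g (xs ! i)" ?n] by simp
  finally show ?thesis by (metis norm_sum)
qed

lemma path_edge_sum_le_infsum:
  assumes "distinct xs" and "\<And>x y. h x y \<ge> 0"
  shows "ennreal (\<Sum>i<length xs - 1. h (xs ! i) (xs ! Suc i)) \<le> (\<Sum>\<^sub>\<infinity>(x, y). ennreal (h x y))"
proof -
  let ?e = "\<lambda>i. (xs ! i, xs ! Suc i)"
  have "inj_on ?e {..<length xs - 1}"
    using assms(1) by (auto simp: inj_on_def nth_eq_iff_index_eq)
  then have "(\<Sum>i<length xs - 1. ennreal (h (xs ! i) (xs ! Suc i)))
      = (\<Sum>p\<in>?e ` {..<length xs - 1}. (\<lambda>(x, y). ennreal (h x y)) p)"
    by (simp add: sum.reindex)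
  also have "\<dots> \<le> (\<Sum>\<^sub>\<infinity>(x, y). ennreal (h x y))"
    by (rule sum_le_infsum_ennreal) auto
  finally show ?thesis
    using assms(2) by (simp add: sum_ennreal)
qed

lemma norm_diff_sq_le_path_length:
  assumes wg: "weighted_graph b c" and Q: "Qt b c g \<le> 1" and p: "path_from_to b xs x y"
  shows "(cmod (g x - g y))\<^sup>2 \<le> 2 * path_length b xs"
proof -
  let ?n = "length xs - 1"
  define w where "w i = b (xs ! i) (xs ! Suc i)" for i
  define D where "D i = cmod (g (xs ! i) - g (xs ! Suc i))" for i
  have ne: "xs \<noteq> []" and dist: "distinct xs" and ends: "hd xs = x" "last xs = y"
    and w_pos: "\<And>i. i < ?n \<Longrightarrow> w i > 0"
    using p unfolding path_from_to_def is_path_def w_def by auto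
  have "ennreal (\<Sum>i<?n. w i * (D i)\<^sup>2)
      \<le> (\<Sum>\<^sub>\<infinity>(u, v). ennreal (b u v * (cmod (g u - g v))\<^sup>2))"
    unfolding w_def D_def
    by (rule path_edge_sum_le_infsum[OF dist]) (simp add: weighted_graphD(1)[OF wg])
  also have "\<dots> \<le> 2 * Qt b c g"
    by (rule edge_energy_le_Qt)
  also have "\<dots> \<le> 2" using Q by (metis mult.right_neutral mult_left_mono zero_le)
  finally have energy: "(\<Sum>i<?n. w i * (D i)\<^sup>2) \<le> 2"
    by (metis ennreal_le_iff ennreal_numeral zero_le_numeral)
  have "(cmod (g x - g y))\<^sup>2 \<le> (\<Sum>i<?n. D i)\<^sup>2"
    using norm_diff_hd_last_le_sum[OF ne, of g] ends unfolding D_def by (intro power_mono) auto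
  also have "\<dots> \<le> (\<Sum>i<?n. 1 / w i) * (\<Sum>i<?n. w i * (D i)\<^sup>2)"
    by (rule Cauchy_Schwarz_weighted_sum[OF w_pos])
  also have "\<dots> \<le> path_length b xs * 2"
    using energy w_pos unfolding path_length_def w_def
    by (intro mult_left_mono sum_nonneg) (simp_all add: less_imp_le)
  finally show ?thesis by simp
qed

section \<open>The resistance metric\<close>

lemma resistance_set_nonempty: "{cmod (f x - f y) | f. f \<in> Dt b c \<and> Qt b c f \<le> 1} \<noteq> {}"
  using Qt_zero[of b c] by (auto simp: Dt_def intro!: exI[of _ "\<lambda>_. 0"])

lemma bdd_above_resistance_set:
  assumes wg: "weighted_graph b c" and con: "graph_connected b"
  shows "bdd_above {cmod (f x - f y) | f. f \<in> Dt b c \<and> Qt b c f \<le> 1}"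
proof (cases "x = y")
  case False
  then obtain xs where "path_from_to b xs x y"
    using con unfolding graph_connected_def by blast
  then have "cmod (f x - f y) \<le> sqrt (2 * path_length b xs)" if "Qt b c f \<le> 1" for f
    using norm_diff_sq_le_path_length[OF wg that] real_le_rsqrt by blast
  then show ?thesis by (auto intro!: bdd_aboveI)
qed (auto intro!: bdd_aboveI[of _ 0])

lemma resistance_metric_le_path_metric:
  assumes wg: "weighted_graph b c" and con: "graph_connected b"
  shows "resistance_metric b c x y \<le> sqrt (2 * path_metric b x y)"
  unfolding resistance_metric_def
proof (rule cSup_least[OF resistance_set_nonempty], clarify)
  fix f assume "Qt b c f \<le> 1"
  show "cmod (f x - f y) \<le> sqrt (2 * path_metric b x y)"
  proof (cases "x = y")
    case False
    let ?P = "{path_length b xs | xs. path_from_to b xs x y}"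
    have "?P \<noteq> {}" using con False unfolding graph_connected_def by blast
    moreover have "(cmod (f x - f y))\<^sup>2 / 2 \<le> l" if "l \<in> ?P" for l
      using that norm_diff_sq_le_path_length[OF wg \<open>Qt b c f \<le> 1\<close>] by fastforce
    ultimately have "(cmod (f x - f y))\<^sup>2 / 2 \<le> Inf ?P"
      by (rule cInf_greatest)
    then show ?thesis
      using False real_le_rsqrt by (simp add: path_metric_def)
  qed (simp add: path_metric_def)
qed

lemma norm_diff_le_resistance_metric:
  assumes wg: "weighted_graph b c" and con: "graph_connected b"
    and Q: "Qt b c f \<le> ennreal K" and K: "K > 0"
  shows "cmod (f x - f y) \<le> sqrt K * resistance_metric b c x y"
proof -
  define g where "g z = complex_of_real (1 / sqrt K) * f z" for z
  have "Qt b c g = ennreal (1 / K) * Qt b c f"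
    unfolding g_def Qt_scale[OF wg] using K by (simp add: power_divide norm_divide)
  also have "\<dots> \<le> ennreal (1 / K) * ennreal K"
    using Q by (rule mult_left_mono) simp
  also have "\<dots> = 1"
    using K by (simp add: ennreal_mult[symmetric])
  finally have Qg: "Qt b c g \<le> 1" .
  then have "g \<in> Dt b c" by (simp add: Dt_def order_le_less_trans)
  with Qg have "cmod (g x - g y) \<le> resistance_metric b c x y"
    unfolding resistance_metric_def by (intro cSup_upper[OF _ bdd_above_resistance_set[OF wg con]]) auto
  moreover have "f x - f y = complex_of_real (sqrt K) * (g x - g y)"
    using K by (simp add: g_def field_simps)
  ultimately show ?thesis
    using K by (simp add: norm_mult)
qed

section \<open>Total boundedness\<close>

lemma totally_bounded_wrt_dominated:
  assumes "totally_bounded_wrt \<tau>"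
    and "\<And>e. e > 0 \<Longrightarrow> \<exists>d>0. \<forall>x y. \<tau> x y < d \<longrightarrow> \<sigma> x y < e"
  shows "totally_bounded_wrt \<sigma>"
  unfolding totally_bounded_wrt_def
proof (intro allI impI)
  fix e :: real assume "e > 0"
  then obtain d where "d > 0" and d: "\<And>x y. \<tau> x y < d \<Longrightarrow> \<sigma> x y < e"
    using assms(2) by blast
  then obtain F where "finite F" and "\<forall>x. \<exists>y\<in>F. \<tau> x y < d"
    using assms(1) unfolding totally_bounded_wrt_def by blast
  then show "\<exists>F. finite F \<and> (\<forall>x. \<exists>y\<in>F. \<sigma> x y < e)"
    using d by blast
qed

lemma bounded_fun_if_totally_bounded_wrt:
  assumes "totally_bounded_wrt \<sigma>" and "L \<ge> 0"
    and "\<And>x y. cmod (f x - f y) \<le> L * \<sigma> x y"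
  shows "bounded_fun f"
proof -
  obtain F where F: "finite F" "\<forall>x. \<exists>y\<in>F. \<sigma> x y < 1"
    using assms(1) unfolding totally_bounded_wrt_def by (meson zero_less_one)
  have "cmod (f x) \<le> (\<Sum>z\<in>F. cmod (f z)) + L" for x
  proof -
    obtain y where "y \<in> F" and "\<sigma> x y < 1" using F by blast
    have "cmod (f x) \<le> cmod (f y) + cmod (f x - f y)"
      by (metis norm_triangle_sub add.commute)
    also have "cmod (f y) \<le> (\<Sum>z\<in>F. cmod (f z))"
      using F(1) \<open>y \<in> F\<close> by (intro member_le_sum) auto
    also have "cmod (f x - f y) \<le> L"
      using assms(3)[of x y] mult_left_mono[OF less_imp_le[OF \<open>\<sigma> x y < 1\<close>] assms(2)] by simp
    finally show ?thesis by simp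
  qed
  then show ?thesis unfolding bounded_fun_def by blast
qed

lemma totally_bounded_resistance_if_path_metric:
  assumes "weighted_graph b c" and "graph_connected b"
    and "totally_bounded_wrt (path_metric b)"
  shows "totally_bounded_wrt (resistance_metric b c)"
proof (rule totally_bounded_wrt_dominated[OF assms(3)])
  fix e :: real assume "e > 0"
  have "resistance_metric b c x y < e" if "path_metric b x y < e\<^sup>2 / 2" for x y
  proof -
    have "resistance_metric b c x y \<le> sqrt (2 * path_metric b x y)"
      by (rule resistance_metric_le_path_metric[OF assms(1,2)])
    also have "\<dots> < sqrt (e\<^sup>2)" using that by (intro real_sqrt_less_mono) simp
    finally show ?thesis using \<open>e > 0\<close> by simp
  qed
  then show "\<exists>d>0. \<forall>x y. path_metric b x y < d \<longrightarrow> resistance_metric b c x y < e"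
    using \<open>e > 0\<close> by (intro exI[of _ "e\<^sup>2 / 2"]) auto
qed

lemma bounded_if_totally_bounded_resistance:
  assumes wg: "weighted_graph b c" and con: "graph_connected b"
    and "totally_bounded_wrt (resistance_metric b c)" and "f \<in> Dt b c"
  shows "bounded_fun f"
proof -
  obtain q where q: "Qt b c f = ennreal q" and "q \<ge> 0"
    using \<open>f \<in> Dt b c\<close> by (cases "Qt b c f") (auto simp: Dt_def)
  then have lip: "cmod (f x - f y) \<le> sqrt (q + 1) * resistance_metric b c x y" for x y
    by (intro norm_diff_le_resistance_metric[OF wg con]) (auto intro: ennreal_leI)
  show ?thesis
    by (rule bounded_fun_if_totally_bounded_wrt[OF assms(3) _ lip]) (simp add: \<open>q \<ge> 0\<close>)
qed

lemma Qt_metric_le_total_mass: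
  assumes wg: "weighted_graph b c" and c0: "\<forall>x. c x = 0"
    and met: "is_metric_on \<sigma>" and intr: "intrinsic b m \<sigma>"
  shows "Qt b c (\<lambda>x. complex_of_real (\<sigma> x y)) \<le> total_mass m"
proof -
  have edge: "ennreal (b u v * (cmod (complex_of_real (\<sigma> u y) - complex_of_real (\<sigma> v y)))\<^sup>2)
      \<le> ennreal (b u v * (\<sigma> u v)\<^sup>2)" for u v
  proof -
    have "\<bar>\<sigma> u y - \<sigma> v y\<bar> \<le> \<sigma> u v"
      using met unfolding is_metric_on_def by (smt (verit))
    then have "(\<sigma> u y - \<sigma> v y)\<^sup>2 \<le> (\<sigma> u v)\<^sup>2"
      by (metis abs_le_square_iff abs_of_nonneg abs_ge_zero order_trans)
    then show ?thesis
      by (intro ennreal_leI mult_left_mono) (simp_all add: weighted_graphD(1)[OF wg] flip: of_real_diff)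
  qed
  have "Qt b c (\<lambda>x. complex_of_real (\<sigma> x y))
      \<le> ennreal (1/2) * (\<Sum>\<^sub>\<infinity>(u, v). ennreal (b u v * (\<sigma> u v)\<^sup>2))"
    unfolding Qt_def using c0 by (auto intro!: mult_left_mono infsum_mono_ennreal edge)
  also have "\<dots> = (\<Sum>\<^sub>\<infinity>u. ennreal (1/2) * (\<Sum>\<^sub>\<infinity>v. ennreal (b u v * (\<sigma> u v)\<^sup>2)))"
    by (simp add: infsum_Sigma_ennreal infsum_cmult_right_ennreal)
  also have "\<dots> \<le> total_mass m"
    unfolding total_mass_def using intr by (intro infsum_mono_ennreal) (simp add: intrinsic_def)
  finally show ?thesis .
qed

lemma totally_bounded_intrinsic_if_resistance:
  assumes wg: "weighted_graph b c" and con: "graph_connected b" and c0: "\<forall>x. c x = 0"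
    and B: "totally_bounded_wrt (resistance_metric b c)"
    and met: "is_metric_on \<sigma>" and fin: "total_mass m < \<infinity>" and intr: "intrinsic b m \<sigma>"
  shows "totally_bounded_wrt \<sigma>"
proof -
  obtain M where M: "total_mass m = ennreal M" and "M \<ge> 0"
    using fin by (cases "total_mass m") auto
  define K where "K = M + 1"
  have "K > 0" using \<open>M \<ge> 0\<close> by (simp add: K_def)
  have dominated: "\<sigma> x y \<le> sqrt K * resistance_metric b c x y" for x y
  proof -
    have "Qt b c (\<lambda>x. complex_of_real (\<sigma> x y)) \<le> ennreal K"
      using Qt_metric_le_total_mass[OF wg c0 met intr, of y] unfolding M
      by (rule order_trans) (auto simp: K_def intro!: ennreal_leI)
    moreover have "\<sigma> y y = 0" and "\<sigma> x y \<ge> 0"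
      using met by (auto simp: is_metric_on_def)
    ultimately show ?thesis
      using norm_diff_le_resistance_metric[OF wg con _ \<open>K > 0\<close>, of _ x y] by fastforce
  qed
  show ?thesis
  proof (rule totally_bounded_wrt_dominated[OF B])
    fix e :: real assume "e > 0"
    have "\<sigma> x y < e" if "resistance_metric b c x y < e / sqrt K" for x y
    proof -
      have "\<sigma> x y \<le> sqrt K * resistance_metric b c x y" by (rule dominated)
      also have "\<dots> < e" using that \<open>K > 0\<close> by (simp add: field_simps)
      finally show ?thesis .
    qed
    then show "\<exists>d>0. \<forall>x y. resistance_metric b c x y < d \<longrightarrow> \<sigma> x y < e"
      using \<open>e > 0\<close> \<open>K > 0\<close> by (intro exI[of _ "e / sqrt K"]) auto
  qed
qed

section \<open>Intrinsic metrics from functions of finite energy\<close>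

lemma exists_positive_weight_summable:
  fixes d :: "'a \<Rightarrow> real"
  assumes "countable (UNIV :: 'a set)" and d_nonneg: "\<And>x. d x \<ge> 0"
  shows "\<exists>w. (\<forall>x. w x > 0) \<and> (\<Sum>\<^sub>\<infinity>x. ennreal (w x * d x)) < \<infinity>"
proof -
  define n where "n = to_nat_on (UNIV :: 'a set)"
  have "inj n" unfolding n_def using assms(1) by (rule inj_on_to_nat_on)
  define w where "w x = (1/2) ^ n x / (1 + d x)" for x
  have "w x > 0" for x
    using d_nonneg[of x] by (simp add: w_def add_pos_nonneg)
  have "w x * d x = (1/2) ^ n x * (d x / (1 + d x))" for x
    by (simp add: w_def)
  also have "\<dots> x \<le> (1/2) ^ n x" for x
    using d_nonneg[of x] by (intro mult_left_le) auto
  finally have "(\<Sum>\<^sub>\<infinity>x. ennreal (w x * d x)) \<le> (\<Sum>\<^sub>\<infinity>x. ennreal ((1/2) ^ n x))"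
    by (intro infsum_mono_ennreal ennreal_leI)
  also have "\<dots> = (\<Sum>\<^sub>\<infinity>k\<in>range n. ennreal ((1/2) ^ k))"
    using \<open>inj n\<close> by (simp add: infsum_reindex o_def)
  also have "\<dots> \<le> (\<Sum>\<^sub>\<infinity>k. ennreal ((1/2) ^ k))"
    by (rule infsum_mono_set_ennreal) simp
  also have "\<dots> < \<infinity>"
    by (simp add: infsum_geometric_half_ennreal)
  finally show ?thesis
    using \<open>\<And>x. w x > 0\<close> by blast
qed

lemma exists_vertex_weight_finite_edge_sum:
  fixes b :: "'x \<Rightarrow> 'x \<Rightarrow> real"
  assumes "countable (UNIV :: 'x set)" and wg: "weighted_graph b c"
  shows "\<exists>w. (\<forall>x. w x > 0) \<and> (\<Sum>\<^sub>\<infinity>(x, y). ennreal (b x y * (w x)\<^sup>2)) < \<infinity>"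
proof -
  define deg where "deg x = (\<Sum>\<^sub>\<infinity>y. b x y)" for x
  have deg_nonneg: "deg x \<ge> 0" for x
    unfolding deg_def by (rule infsum_nonneg) (simp add: weighted_graphD(1)[OF wg])
  obtain v where v_pos: "\<forall>x. v x > 0" and fin: "(\<Sum>\<^sub>\<infinity>x. ennreal (v x * deg x)) < \<infinity>"
    using exists_positive_weight_summable[of deg, OF assms(1) deg_nonneg] by blast
  then have v_nonneg: "v x \<ge> 0" for x
    by (simp add: less_imp_le)
  have row: "(\<Sum>\<^sub>\<infinity>y. ennreal (b x y * v x)) = ennreal (v x * deg x)" for x
  proof -
    have "((\<lambda>y. b x y * v x) has_sum (deg x * v x)) UNIV"
      unfolding deg_def
      by (intro has_sum_cmult_left has_sum_infsum) (rule weighted_graphD(3)[OF wg])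
    then show ?thesis
      using weighted_graphD(1)[OF wg] v_nonneg[of x] by (subst infsum_ennreal_of_has_sum) (auto simp: mult.commute)
  qed
  have "(\<Sum>\<^sub>\<infinity>(x, y). ennreal (b x y * (sqrt (v x))\<^sup>2)) = (\<Sum>\<^sub>\<infinity>x. ennreal (v x * deg x))"
    by (subst infsum_Sigma_ennreal) (simp add: v_nonneg row)
  with fin v_pos show ?thesis
    by (intro exI[of _ "\<lambda>x. sqrt (v x)"]) auto
qed

lemma is_metric_on_perturbed:
  fixes f :: "'a \<Rightarrow> 'b :: real_normed_vector"
  assumes w_pos: "\<And>x. w x > 0"
  shows "is_metric_on (\<lambda>x y. norm (f x - f y) + (if x = y then 0 else w x + w y))"
  unfolding is_metric_on_def
proof (intro conjI allI)
  fix x y z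
  have "w x > 0" "w y > 0" "w z > 0" "norm (f x - f y) \<ge> 0" by (simp_all add: w_pos)
  then show "norm (f x - f y) + (if x = y then 0 else w x + w y) \<ge> 0"
    and "norm (f x - f y) + (if x = y then 0 else w x + w y) = 0 \<longleftrightarrow> x = y"
    by (auto simp del: norm_ge_zero)
  show "norm (f x - f y) + (if x = y then 0 else w x + w y)
      = norm (f y - f x) + (if y = x then 0 else w y + w x)"
    by (simp add: norm_minus_commute add.commute)
  have "norm (f x - f z) \<le> norm (f x - f y) + norm (f y - f z)"
    by (rule norm_diff_triangle_le[of _ "f y"]) simp_all
  with \<open>w x > 0\<close> \<open>w y > 0\<close> \<open>w z > 0\<close>
  show "norm (f x - f z) + (if x = z then 0 else w x + w z)
      \<le> norm (f x - f y) + (if x = y then 0 else w x + w y)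
        + (norm (f y - f z) + (if y = z then 0 else w y + w z))"
    by auto
qed

lemma edge_energy_perturbed_finite:
  assumes wg: "weighted_graph b c" and w_pos: "\<And>x. w x > 0"
    and Ef: "(\<Sum>\<^sub>\<infinity>(x, y). ennreal (b x y * (cmod (f x - f y))\<^sup>2)) < \<infinity>"
    and W: "(\<Sum>\<^sub>\<infinity>(x, y). ennreal (b x y * (w x)\<^sup>2)) < \<infinity>"
  shows "(\<Sum>\<^sub>\<infinity>(x, y). ennreal (b x y * (cmod (f x - f y) + (if x = y then 0 else w x + w y))\<^sup>2)) < \<infinity>"
proof -
  define e where "e h x y = ennreal (b x y * (h x y)\<^sup>2)" for h :: "'a \<Rightarrow> 'a \<Rightarrow> real" and x y
  define s where "s x y = cmod (f x - f y) + (if x = y then 0 else w x + w y)" for x y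
  have sq3: "(a + p + q)\<^sup>2 \<le> 3 * (a\<^sup>2 + p\<^sup>2 + q\<^sup>2)" for a p q :: real
  proof -
    have "0 \<le> (a - p)\<^sup>2 + (p - q)\<^sup>2 + (a - q)\<^sup>2" by simp
    then show ?thesis by (simp add: power2_eq_square algebra_simps)
  qed
  have pointwise: "e s x y \<le> 3 * (e (\<lambda>x y. cmod (f x - f y)) x y + e (\<lambda>x y. w x) x y + e (\<lambda>x y. w y) x y)"
    for x y
  proof -
    have b: "b x y \<ge> 0" by (rule weighted_graphD(1)[OF wg])
    have "(s x y)\<^sup>2 \<le> (cmod (f x - f y) + w x + w y)\<^sup>2"
      using w_pos[of x] w_pos[of y] unfolding s_def by (intro power_mono) auto
    also have "\<dots> \<le> 3 * ((cmod (f x - f y))\<^sup>2 + (w x)\<^sup>2 + (w y)\<^sup>2)"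
      by (rule sq3)
    finally have "b x y * (s x y)\<^sup>2 \<le> b x y * (3 * ((cmod (f x - f y))\<^sup>2 + (w x)\<^sup>2 + (w y)\<^sup>2))"
      using b by (rule mult_left_mono)
    then have "b x y * (s x y)\<^sup>2
        \<le> 3 * (b x y * (cmod (f x - f y))\<^sup>2 + b x y * (w x)\<^sup>2 + b x y * (w y)\<^sup>2)"
      by (simp add: algebra_simps)
    then have "ennreal (b x y * (s x y)\<^sup>2)
        \<le> ennreal (3 * (b x y * (cmod (f x - f y))\<^sup>2 + b x y * (w x)\<^sup>2 + b x y * (w y)\<^sup>2))"
      by (rule ennreal_leI)
    then show ?thesis
      unfolding e_def using b by (simp add: ennreal_mult ennreal_plus)
  qed
  have swap: "(\<Sum>\<^sub>\<infinity>(x, y). ennreal (b x y * (w y)\<^sup>2)) = (\<Sum>\<^sub>\<infinity>(x, y). ennreal (b x y * (w x)\<^sup>2))"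
    by (subst infsum_swap_ennreal) (simp add: weighted_graphD(2)[OF wg])
  have "(\<Sum>\<^sub>\<infinity>(x, y). e s x y)
      \<le> (\<Sum>\<^sub>\<infinity>(x, y). 3 * (e (\<lambda>x y. cmod (f x - f y)) x y + e (\<lambda>x y. w x) x y + e (\<lambda>x y. w y) x y))"
    by (rule infsum_mono_ennreal) (simp only: case_prod_unfold pointwise)
  also have "\<dots> = 3 * ((\<Sum>\<^sub>\<infinity>(x, y). e (\<lambda>x y. cmod (f x - f y)) x y)
      + (\<Sum>\<^sub>\<infinity>(x, y). e (\<lambda>x y. w x) x y) + (\<Sum>\<^sub>\<infinity>(x, y). e (\<lambda>x y. w y) x y))"
    by (simp only: case_prod_unfold infsum_cmult_right_ennreal infsum_add ennreal_summable_on)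
  also have "\<dots> < \<infinity>"
    using Ef W unfolding e_def swap by (simp add: ennreal_mult_less_top)
  finally show ?thesis
    by (simp add: e_def s_def)
qed

lemma exists_intrinsic_finite_measure:
  assumes "(\<Sum>\<^sub>\<infinity>(x, y). ennreal (b x y * (\<sigma> x y)\<^sup>2)) < \<infinity>"
  shows "\<exists>m. is_measure m \<and> total_mass m < \<infinity> \<and> intrinsic b m \<sigma>"
proof -
  define M where "M x = ennreal (1/2) * (\<Sum>\<^sub>\<infinity>y. ennreal (b x y * (\<sigma> x y)\<^sup>2))" for x
  have "(\<Sum>\<^sub>\<infinity>x. M x) = ennreal (1/2) * (\<Sum>\<^sub>\<infinity>(x, y). ennreal (b x y * (\<sigma> x y)\<^sup>2))"
    unfolding M_def infsum_cmult_right_ennreal by (simp add: infsum_Sigma_ennreal)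
  also have "\<dots> < \<infinity>"
    using assms by (rule ennreal_times_less_top)
  finally have total: "(\<Sum>\<^sub>\<infinity>x. M x) < \<infinity>" .
  define m where "m x = enn2real (M x)" for x
  have "M x < \<infinity>" for x
    using sum_le_infsum_ennreal[of "{x}" UNIV M] total by simp
  then have m_eq: "ennreal (m x) = M x" for x
    by (simp add: m_def)
  have "is_measure m"
    by (simp add: is_measure_def m_def)
  moreover have "total_mass m < \<infinity>"
    unfolding total_mass_def m_eq by (rule total)
  moreover have "intrinsic b m \<sigma>"
    unfolding intrinsic_def m_eq M_def by simp
  ultimately show ?thesis by blast
qed

lemma bounded_if_intrinsic_totally_bounded:
  fixes b :: "'x \<Rightarrow> 'x \<Rightarrow> real"
  assumes cnt: "countable (UNIV :: 'x set)" and wg: "weighted_graph b c"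
    and C: "\<And>\<sigma> m. is_metric_on \<sigma> \<Longrightarrow> is_measure m \<Longrightarrow> total_mass m < \<infinity> \<Longrightarrow> intrinsic b m \<sigma>
              \<Longrightarrow> totally_bounded_wrt \<sigma>"
    and f: "f \<in> Dt b c"
  shows "bounded_fun f"
proof -
  obtain w where w_pos: "\<And>x. w x > 0" and W: "(\<Sum>\<^sub>\<infinity>(x, y). ennreal (b x y * (w x)\<^sup>2)) < \<infinity>"
    using exists_vertex_weight_finite_edge_sum[OF cnt wg] by blast
  define \<sigma> where "\<sigma> x y = cmod (f x - f y) + (if x = y then 0 else w x + w y)" for x y
  have "(\<Sum>\<^sub>\<infinity>(x, y). ennreal (b x y * (\<sigma> x y)\<^sup>2)) < \<infinity>"
    unfolding \<sigma>_def using wg w_pos edge_energy_finite_if_Dt[OF f] W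
    by (rule edge_energy_perturbed_finite)
  then obtain m where "is_measure m" "total_mass m < \<infinity>" "intrinsic b m \<sigma>"
    using exists_intrinsic_finite_measure by blast
  moreover have "is_metric_on \<sigma>"
    unfolding \<sigma>_def using w_pos by (rule is_metric_on_perturbed)
  ultimately have "totally_bounded_wrt \<sigma>"
    using C by blast
  moreover have "cmod (f x - f y) \<le> 1 * \<sigma> x y" for x y
    using w_pos[of x] w_pos[of y] by (simp add: \<sigma>_def)
  ultimately show ?thesis
    by (rule bounded_fun_if_totally_bounded_wrt[OF _ zero_le_one])
qed

theorem mainTheorem8:
  fixes b :: "'x \<Rightarrow> 'x \<Rightarrow> real" and c :: "'x \<Rightarrow> real"
  assumes "countable (UNIV :: 'x set)" and "infinite (UNIV :: 'x set)"
    and "weighted_graph b c" and "graph_connected b"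
  defines "A \<equiv> totally_bounded_wrt (path_metric b)"
    and "B \<equiv> totally_bounded_wrt (resistance_metric b c)"
    and "C \<equiv> (\<forall>\<sigma> m. is_metric_on \<sigma> \<and> is_measure m \<and> total_mass m < \<infinity> \<and> intrinsic b m \<sigma>
                 \<longrightarrow> totally_bounded_wrt \<sigma>)"
    and "D \<equiv> (\<forall>f \<in> Dt b c. bounded_fun f)"
  shows "(A \<longrightarrow> B) \<and> (B \<longrightarrow> D) \<and> ((\<forall>x. c x = 0) \<longrightarrow> (B \<longrightarrow> C) \<and> (C \<longrightarrow> D))"
proof -
  have "A \<longrightarrow> B"
    unfolding A_def B_def using totally_bounded_resistance_if_path_metric[OF assms(3,4)] by blast
  moreover have "B \<longrightarrow> D"
    unfolding B_def D_def using bounded_if_totally_bounded_resistance[OF assms(3,4)] by blast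
  moreover have "(\<forall>x. c x = 0) \<longrightarrow> B \<longrightarrow> C"
    unfolding B_def C_def using totally_bounded_intrinsic_if_resistance[OF assms(3,4)] by blast
  moreover have "C \<longrightarrow> D"
    unfolding C_def D_def using bounded_if_intrinsic_totally_bounded[OF assms(1,3)] by metis
  ultimately show ?thesis by blast
qed

end
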